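(* Let $\Phi_1,\dots,\Phi_N$ be quantum channels on $\mathcal L(\mathbb C^d)$ and $1\le K\le N$. For a subset $S\subseteq[N]$ with $|S|=K$ and orthonormal bases $\mathbf e=(\mathbf e^{(i)})_{i\in S}$ of $\mathbb C^d$, let $$\mathrm{val}(\mathbf\Phi,S,\mathbf e):=\min\{\operatorname{Tr}H:\ H \text{ Hermitian},\ H\ge G_{\Phi_i,\mathbf e^{(i)}}\ \forall i\in S\}.$$ If there exist at least one $K$-subset $S\subseteq[N]$ and bases $\mathbf e$ with $\mathrm{val}(\mathbf\Phi,S,\mathbf e)>d$, then $(\Phi_1,\dots,\Phi_N)$ is $(N,K)$-incompatible. If for every $K$-subset $S\subseteq[N]$ there exist bases $\mathbf e_S$ with $\mathrm{val}(\mathbf\Phi,S,\mathbf e_S)>d$, then $(\Phi_1,\dots,\Phi_N)$ is $(N,K)$-strong incompatible.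
   Context: A family of channels $(\Phi_i)_{i\in S}$ on $\mathcal L(\mathbb C^d)$ is compatible if there is a completely positive trace-preserving $\Lambda:\mathcal L(\mathbb C^d)\to\mathcal L((\mathbb C^d)^{\otimes |S|})$ whose marginal on the factor labelled $i$ is $\Phi_i$ for every $i\in S$. The $N$-tuple is $(N,K)$-incompatible if at least one $K$-subset of the channels is incompatible, and $(N,K)$-strong incompatible if all $K$-subsets are incompatible. For $X=\sum X_{ij}|i\rangle\langle j|$, $|X\rangle:=\sum X_{ij}|i\rangle\otimes|j\rangle$; for a channel $\Phi$ with Hilbert–Schmidt adjoint $\Phi^*$ and orthonormal basis $\mathbf e=(e_i)$, $G_{\Phi,\mathbf e}:=\sum_{i=1}^d |\Phi^*(|e_i\rangle\langle e_i|)\rangle\langle\Phi^*(|e_i\rangle\langle e_i|)|/\operatorname{Tr}\Phi^*(|e_i\rangle\langle e_i|)$ (zero-denominator terms omitted). *)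

theory Defs
  imports "HOL-Analysis.Analysis"
begin

text \<open>An operator (matrix) on a finite-dimensional Hilbert space with a
finite orthonormal index set I is represented by its matrix entries
'i => 'i => complex; only the entries on I x I are meaningful.
C^d uses the index set {..<d} (nat).  A linear map from operators on I to operators on J
is represented by its coefficient kernel c, acting by
(apply_map I c X) j j' = sum over i, i' in I of c j j' i i' * X i i'.
Every linear map has exactly one such kernel (restricted to the carriers).\<close>

type_synonym 'i mat = "'i \<Rightarrow> 'i \<Rightarrow> complex"
type_synonym ('j, 'i) lmap = "'j \<Rightarrow> 'j \<Rightarrow> 'i \<Rightarrow> 'i \<Rightarrow> complex"

definition apply_map :: "'i set \<Rightarrow> ('j, 'i) lmap \<Rightarrow> 'i mat \<Rightarrow> 'j mat" where
  "apply_map I c X = (\<lambda>j j'. \<Sum>i\<in>I. \<Sum>i'\<in>I. c j j' i i' * X i i')"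

definition mtrace :: "'i set \<Rightarrow> 'i mat \<Rightarrow> complex" where
  "mtrace I X = (\<Sum>i\<in>I. X i i)"

definition hermitian_on :: "'i set \<Rightarrow> 'i mat \<Rightarrow> bool" where
  "hermitian_on I H \<longleftrightarrow> (\<forall>x\<in>I. \<forall>y\<in>I. H x y = cnj (H y x))"

definition psd_on :: "'i set \<Rightarrow> 'i mat \<Rightarrow> bool" where
  "psd_on I A \<longleftrightarrow> (\<forall>v :: 'i \<Rightarrow> complex.
      let q = (\<Sum>x\<in>I. \<Sum>y\<in>I. cnj (v x) * A x y * v y) in Im q = 0 \<and> 0 \<le> Re q)"

text \<open>Complete positivity: id_n tensor Phi maps PSD operators to PSD operators, for all n.\<close>
definition completely_positive :: "'i set \<Rightarrow> 'j set \<Rightarrow> ('j, 'i) lmap \<Rightarrow> bool" where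
  "completely_positive I J c \<longleftrightarrow>
     (\<forall>(n::nat) (X :: (nat \<times> 'i) mat). psd_on ({..<n} \<times> I) X \<longrightarrow>
        psd_on ({..<n} \<times> J)
          (\<lambda>(a, j) (a', j'). \<Sum>i\<in>I. \<Sum>i'\<in>I. c j j' i i' * X (a, i) (a', i')))"

definition trace_preserving :: "'i set \<Rightarrow> 'j set \<Rightarrow> ('j, 'i) lmap \<Rightarrow> bool" where
  "trace_preserving I J c \<longleftrightarrow> (\<forall>X. mtrace J (apply_map I c X) = mtrace I X)"

definition channel :: "'i set \<Rightarrow> 'j set \<Rightarrow> ('j, 'i) lmap \<Rightarrow> bool" where
  "channel I J c \<longleftrightarrow> completely_positive I J c \<and> trace_preserving I J c"

text \<open>Index set of (C^d)^{tensor S}: multi-indices f : S -> {..<d}.\<close>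
definition tens_idx :: "nat \<Rightarrow> nat set \<Rightarrow> (nat \<Rightarrow> nat) set" where
  "tens_idx d S = PiE S (\<lambda>_. {..<d})"

text \<open>Marginal on the factor labelled i: partial trace over all factors in S - {i}.\<close>
definition marginal :: "nat \<Rightarrow> nat set \<Rightarrow> nat \<Rightarrow> (nat \<Rightarrow> nat) mat \<Rightarrow> nat mat" where
  "marginal d S i Y = (\<lambda>a b. \<Sum>h\<in>tens_idx d (S - {i}). Y (h(i := a)) (h(i := b)))"

definition compatible :: "nat \<Rightarrow> nat set \<Rightarrow> (nat \<Rightarrow> (nat, nat) lmap) \<Rightarrow> bool" where
  "compatible d S \<Phi> \<longleftrightarrow>
     (\<exists>\<Lambda> :: (nat \<Rightarrow> nat, nat) lmap. channel {..<d} (tens_idx d S) \<Lambda> \<and>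
        (\<forall>i\<in>S. \<forall>X. \<forall>a<d. \<forall>b<d.
           marginal d S i (apply_map {..<d} \<Lambda> X) a b = apply_map {..<d} (\<Phi> i) X a b))"

definition NK_incompatible :: "nat \<Rightarrow> nat \<Rightarrow> nat \<Rightarrow> (nat \<Rightarrow> (nat, nat) lmap) \<Rightarrow> bool" where
  "NK_incompatible d N K \<Phi> \<longleftrightarrow>
     (\<exists>S. S \<subseteq> {1..N} \<and> card S = K \<and> \<not> compatible d S \<Phi>)"

definition NK_strong_incompatible :: "nat \<Rightarrow> nat \<Rightarrow> nat \<Rightarrow> (nat \<Rightarrow> (nat, nat) lmap) \<Rightarrow> bool" where
  "NK_strong_incompatible d N K \<Phi> \<longleftrightarrow>
     (\<forall>S. S \<subseteq> {1..N} \<and> card S = K \<longrightarrow> \<not> compatible d S \<Phi>)"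

text \<open>Hilbert-Schmidt adjoint: Tr(Y^* Phi(X)) = Tr(adj(Y)^* X).\<close>
definition hs_adjoint :: "'j set \<Rightarrow> ('j, 'i) lmap \<Rightarrow> 'j mat \<Rightarrow> 'i mat" where
  "hs_adjoint J c Y = (\<lambda>i i'. \<Sum>j\<in>J. \<Sum>j'\<in>J. cnj (c j j' i i') * Y j j')"

definition onb :: "nat \<Rightarrow> (nat \<Rightarrow> nat \<Rightarrow> complex) \<Rightarrow> bool" where
  "onb d e \<longleftrightarrow> (\<forall>k<d. \<forall>l<d. (\<Sum>a<d. cnj (e k a) * e l a) = (if k = l then 1 else 0))"

definition ketbra :: "(nat \<Rightarrow> complex) \<Rightarrow> nat mat" where
  "ketbra v = (\<lambda>a b. v a * cnj (v b))"

text \<open>|X><X| for the vectorisation |X> = sum X_ij |i> (x) |j>, indexed by pairs (i,j).\<close>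
definition vec_outer :: "nat mat \<Rightarrow> (nat \<times> nat) mat" where
  "vec_outer X = (\<lambda>(i, j) (i', j'). X i j * cnj (X i' j'))"

definition G_mat :: "nat \<Rightarrow> (nat, nat) lmap \<Rightarrow> (nat \<Rightarrow> nat \<Rightarrow> complex) \<Rightarrow> (nat \<times> nat) mat" where
  "G_mat d \<Phi> e = (\<lambda>p q. \<Sum>k\<in>{k. k < d \<and> mtrace {..<d} (hs_adjoint {..<d} \<Phi> (ketbra (e k))) \<noteq> 0}.
      vec_outer (hs_adjoint {..<d} \<Phi> (ketbra (e k))) p q
        / mtrace {..<d} (hs_adjoint {..<d} \<Phi> (ketbra (e k))))"

text \<open>val(Phi, S, e) = min { Tr H : H Hermitian on C^d (x) C^d, H >= G_{Phi_i, e^(i)} for i in S };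
  rendered as the infimum (the minimum is attained).\<close>
definition sdp_val :: "nat \<Rightarrow> (nat \<Rightarrow> (nat, nat) lmap) \<Rightarrow> nat set \<Rightarrow> (nat \<Rightarrow> nat \<Rightarrow> nat \<Rightarrow> complex) \<Rightarrow> real" where
  "sdp_val d \<Phi> S e = Inf {Re (mtrace ({..<d} \<times> {..<d}) H) | H.
      hermitian_on ({..<d} \<times> {..<d}) H \<and>
      (\<forall>i\<in>S. psd_on ({..<d} \<times> {..<d}) (\<lambda>p q. H p q - G_mat d (\<Phi> i) (e i) p q))}"

end

theory Submission
  imports "Jordan_Normal_Form.Determinant" Defs
begin

text \<open>
  Suppose the channels \<Phi>_i (i \<in> S) are the marginals of a joint channel \<Lambda>.  Pull the
  product basis w_l = \<otimes>_i e^(i)_(l_i) of the tensor power back through the adjoint: the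
  operators M_l = \<Lambda>^*(|w_l\<rangle>\<langle>w_l|) are positive, they sum to the identity because \<Lambda> is
  trace preserving, and the marginal condition says that \<Phi>_i^*(|e^(i)_k\<rangle>\<langle>e^(i)_k|) is the
  sum of the M_l with l_i = k.  The Hermitian matrix H = \<Sum>_l |M_l\<rangle>\<langle>M_l| / Tr M_l then
  dominates every G_(\<Phi>_i, e^(i)): evaluated at a vector v, with y_l = \<langle>v|M_l\<rangle>, this is the
  Cauchy-Schwarz inequality |\<Sum>_(l \<in> L) y_l|^2 / \<Sum>_(l \<in> L) Tr M_l \<le> \<Sum>_(l \<in> L) |y_l|^2 / Tr M_l
  on each fibre L = {l. l_i = k}.  Finally \<parallel>M_l\<parallel>_2 \<le> Tr M_l for positive M_l, so
  Tr H \<le> \<Sum>_l Tr M_l = d.  Hence val \<le> d for every compatible K-subset, which is the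
  contrapositive of both claims.
\<close>

section \<open>Positive semidefinite matrices\<close>

definition qform :: "'i set \<Rightarrow> 'i mat \<Rightarrow> ('i \<Rightarrow> complex) \<Rightarrow> complex" where
  "qform I A v = (\<Sum>x\<in>I. \<Sum>y\<in>I. cnj (v x) * A x y * v y)"

definition rank_one :: "('i \<Rightarrow> complex) \<Rightarrow> 'i mat" where
  "rank_one u = (\<lambda>a b. u a * cnj (u b))"

lemma psd_on_iff_qform: "psd_on I A \<longleftrightarrow> (\<forall>v. Im (qform I A v) = 0 \<and> 0 \<le> Re (qform I A v))"
  by (simp add: psd_on_def qform_def Let_def)

lemma psd_onI_real_nonneg:
  assumes "\<And>v. \<exists>r\<ge>0. qform I A v = of_real r"
  shows "psd_on I A"
  using assms unfolding psd_on_iff_qform by (metis Im_complex_of_real Re_complex_of_real)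

lemma qform_diff: "qform I (\<lambda>p q. A p q - B p q) v = qform I A v - qform I B v"
  by (simp add: qform_def algebra_simps sum_subtractf)

lemma sum_sum_delta:
  assumes "finite I" "a \<in> I" "b \<in> I"
  shows "(\<Sum>x\<in>I. \<Sum>y\<in>I. if x = a then if y = b then F x y else 0 else (0::'a::comm_monoid_add)) = F a b"
proof -
  have "(\<Sum>x\<in>I. \<Sum>y\<in>I. if x = a then if y = b then F x y else 0 else (0::'a))
      = (\<Sum>x\<in>I. if x = a then (\<Sum>y\<in>I. if y = b then F x y else 0) else 0)"
    by (intro sum.cong refl) auto
  also have "\<dots> = F a b" using assms by simp
  finally show ?thesis .
qed

lemma qform_unit_vector:
  assumes "finite I" "a \<in> I"
  shows "qform I A (\<lambda>x. if x = a then 1 else 0) = A a a"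
proof -
  have "qform I A (\<lambda>x. if x = a then 1 else 0)
      = (\<Sum>x\<in>I. \<Sum>y\<in>I. if x = a then if y = a then A x y else 0 else 0)"
    unfolding qform_def by (intro sum.cong refl) simp
  also have "\<dots> = A a a" using assms by (simp only: sum_sum_delta)
  finally show ?thesis .
qed

lemma qform_two_point:
  assumes "finite I" "a \<in> I" "b \<in> I" "a \<noteq> b"
  shows "qform I A (\<lambda>z. if z = a then x else if z = b then y else 0)
    = cnj x * A a a * x + cnj x * A a b * y + cnj y * A b a * x + cnj y * A b b * y"
proof -
  have v: "(if z = a then x else if z = b then y else 0) = (if z = a then x else 0) + (if z = b then y else 0)"
    for z using assms(4) by auto
  have "qform I A (\<lambda>z. if z = a then x else if z = b then y else 0) = (\<Sum>z\<in>I. \<Sum>z'\<in>I.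
      (if z = a then if z' = a then cnj x * A z z' * x else 0 else 0)
    + (if z = a then if z' = b then cnj x * A z z' * y else 0 else 0)
    + (if z = b then if z' = a then cnj y * A z z' * x else 0 else 0)
    + (if z = b then if z' = b then cnj y * A z z' * y else 0 else 0))"
    unfolding qform_def v by (intro sum.cong refl) (simp add: algebra_simps)
  also have "\<dots> = cnj x * A a a * x + cnj x * A a b * y + cnj y * A b a * x + cnj y * A b b * y"
    unfolding sum.distrib using assms by (simp only: sum_sum_delta)
  finally show ?thesis .
qed

lemma psd_on_diag:
  assumes "finite I" "psd_on I A" "a \<in> I"
  shows "Im (A a a) = 0" "0 \<le> Re (A a a)"
  using assms(2) qform_unit_vector[OF assms(1,3), of A] unfolding psd_on_iff_qform by metis+

lemma psd_on_hermitian: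
  assumes "finite I" "psd_on I A" "a \<in> I" "b \<in> I"
  shows "A a b = cnj (A b a)"
proof (cases "a = b")
  case True
  thus ?thesis using psd_on_diag(1)[OF assms(1-3)] by (simp add: complex_eq_iff)
next
  case False
  have diag: "Im (A a a) = 0" "Im (A b b) = 0"
    using psd_on_diag(1)[OF assms(1,2)] assms(3,4) by auto
  have "Im (qform I A (\<lambda>z. if z = a then 1 else if z = b then 1 else 0)) = 0"
    using assms(2) by (simp add: psd_on_iff_qform)
  hence im: "Im (A a b) + Im (A b a) = 0"
    using qform_two_point[OF assms(1,3,4) False, of A 1 1] diag by simp
  have "Im (qform I A (\<lambda>z. if z = a then 1 else if z = b then \<i> else 0)) = 0"
    using assms(2) by (simp add: psd_on_iff_qform)
  hence re: "Re (A a b) - Re (A b a) = 0"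
    using qform_two_point[OF assms(1,3,4) False, of A 1 \<i>] diag by simp
  show ?thesis using im re by (simp add: complex_eq_iff)
qed

lemma quadratic_nonneg_imp_le:
  fixes \<alpha> \<beta> m :: real
  assumes "0 \<le> \<alpha>" "0 \<le> \<beta>" "\<And>\<tau>. 0 \<le> \<alpha> * \<tau>\<^sup>2 - 2 * \<tau> * m + \<beta> * m"
  shows "m \<le> \<alpha> * \<beta>"
proof (cases "\<beta> = 0")
  case True
  define s where "s = \<alpha> + 1"
  have s: "s \<noteq> 0" "\<alpha> - 2 * s < 0" using assms(1) by (simp_all add: s_def)
  have "0 \<le> \<alpha> * (m / s)\<^sup>2 - 2 * (m / s) * m"
    using assms(3)[of "m / s"] True by simp
  also have "\<dots> = m\<^sup>2 * (\<alpha> - 2 * s) / s\<^sup>2"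
    using s(1) by (simp add: field_simps power2_eq_square)
  finally have "0 \<le> m\<^sup>2 * (\<alpha> - 2 * s)" using s(1) by (simp add: zero_le_divide_iff)
  hence "m = 0" using s(2) by (simp add: zero_le_mult_iff)
  thus ?thesis using True by simp
next
  case False
  have "0 \<le> \<beta> * (\<alpha> * \<beta> - m)"
    using assms(3)[of \<beta>] by (simp add: algebra_simps power2_eq_square)
  thus ?thesis using False assms(2) by (simp add: zero_le_mult_iff)
qed

lemma psd_on_entry_bound:
  assumes "finite I" "psd_on I A" "a \<in> I" "b \<in> I"
  shows "(cmod (A a b))\<^sup>2 \<le> Re (A a a) * Re (A b b)"
proof (cases "a = b")
  case True
  thus ?thesis using psd_on_diag(1)[OF assms(1-3)] by (simp add: cmod_eq_Re power2_eq_square)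
next
  case False
  define \<alpha> \<beta> m where "\<alpha> = Re (A a a)" and "\<beta> = Re (A b b)" and "m = (cmod (A a b))\<^sup>2"
  have \<alpha>: "A a a = of_real \<alpha>" "0 \<le> \<alpha>" and \<beta>: "A b b = of_real \<beta>" "0 \<le> \<beta>"
    using psd_on_diag[OF assms(1,2)] assms(3,4) by (simp_all add: \<alpha>_def \<beta>_def complex_eq_iff)
  have m: "A a b * cnj (A a b) = of_real m"
    using complex_norm_square[of "A a b"] by (simp add: m_def)
  have quadratic_nonneg: "0 \<le> \<alpha> * \<tau>\<^sup>2 - 2 * \<tau> * m + \<beta> * m" for \<tau> :: real
  proof -
    let ?v = "\<lambda>z. if z = a then of_real \<tau> else if z = b then - cnj (A a b) else 0"
    have "qform I A ?v = of_real \<alpha> * (of_real \<tau>)\<^sup>2 - 2 * of_real \<tau> * (A a b * cnj (A a b))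
        + of_real \<beta> * (A a b * cnj (A a b))"
      unfolding qform_two_point[OF assms(1,3,4) False] \<alpha>(1) \<beta>(1) psd_on_hermitian[OF assms(1,2,4,3)]
      by (simp add: algebra_simps power2_eq_square)
    moreover have "0 \<le> Re (qform I A ?v)"
      using assms(2) by (simp add: psd_on_iff_qform)
    ultimately show ?thesis unfolding m(1) by simp
  qed
  have "m \<le> \<alpha> * \<beta>"
    using \<alpha>(2) \<beta>(2) quadratic_nonneg by (rule quadratic_nonneg_imp_le)
  thus ?thesis by (simp add: m_def \<alpha>_def \<beta>_def)
qed

lemma psd_on_trace:
  assumes "finite I" "psd_on I A"
  shows "Im (mtrace I A) = 0" "0 \<le> Re (mtrace I A)"
  using psd_on_diag[OF assms] unfolding mtrace_def by (auto intro: sum_nonneg)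

lemma psd_on_hs_norm_le_trace:
  assumes "finite I" "psd_on I A"
  shows "(\<Sum>a\<in>I. \<Sum>b\<in>I. (cmod (A a b))\<^sup>2) \<le> (Re (mtrace I A))\<^sup>2"
proof -
  have "(\<Sum>a\<in>I. \<Sum>b\<in>I. (cmod (A a b))\<^sup>2) \<le> (\<Sum>a\<in>I. \<Sum>b\<in>I. Re (A a a) * Re (A b b))"
    using assms by (intro sum_mono psd_on_entry_bound) auto
  also have "\<dots> = (Re (mtrace I A))\<^sup>2"
    by (simp add: power2_eq_square sum_product mtrace_def)
  finally show ?thesis .
qed

lemma psd_on_eq_0_if_trace_0:
  assumes "finite I" "psd_on I A" "mtrace I A = 0" "a \<in> I" "b \<in> I"
  shows "A a b = 0"
proof -
  have "Re (A c c) = 0" if "c \<in> I" for c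
  proof -
    have "Re (A c c) \<le> Re (mtrace I A)"
      unfolding mtrace_def Re_sum using assms(1,2) that psd_on_diag(2) by (intro member_le_sum) auto
    thus ?thesis using assms(3) psd_on_diag(2)[OF assms(1,2) that] by simp
  qed
  thus ?thesis using psd_on_entry_bound[OF assms(1,2,4,5)] assms(4,5) by simp
qed

lemma psd_on_rank_one: "psd_on I (rank_one v)"
proof (rule psd_onI_real_nonneg)
  fix u
  define z where "z = (\<Sum>x\<in>I. cnj (u x) * v x)"
  have "qform I (rank_one v) u = (\<Sum>x\<in>I. \<Sum>y\<in>I. (cnj (u x) * v x) * cnj (cnj (u y) * v y))"
    unfolding qform_def rank_one_def by (simp add: mult_ac)
  also have "\<dots> = z * cnj z"
    unfolding z_def cnj_sum sum_product ..
  also have "\<dots> = of_real ((cmod z)\<^sup>2)"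
    using complex_norm_square[of z] by simp
  finally show "\<exists>r\<ge>0. qform I (rank_one v) u = of_real r" by (intro exI[of _ "(cmod z)\<^sup>2"]) simp
qed

lemma norm_sum_squared_div_sum_le:
  fixes r :: "'a \<Rightarrow> real" and y :: "'a \<Rightarrow> complex"
  assumes "finite L" "\<And>l. l \<in> L \<Longrightarrow> 0 \<le> r l" "\<And>l. l \<in> L \<Longrightarrow> r l = 0 \<Longrightarrow> y l = 0"
  shows "(cmod (\<Sum>l\<in>L. y l))\<^sup>2 / (\<Sum>l\<in>L. r l) \<le> (\<Sum>l\<in>L. (cmod (y l))\<^sup>2 / r l)"
proof -
  have "cmod (\<Sum>l\<in>L. y l) \<le> (\<Sum>l\<in>L. cmod (y l))" by (rule norm_sum)
  also have "\<dots> = (\<Sum>l\<in>L. sqrt (r l) * (cmod (y l) / sqrt (r l)))"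
  proof (rule sum.cong[OF refl])
    fix l assume "l \<in> L"
    thus "cmod (y l) = sqrt (r l) * (cmod (y l) / sqrt (r l))"
      using assms(2,3) by (cases "r l = 0") auto
  qed
  finally have "(cmod (\<Sum>l\<in>L. y l))\<^sup>2 \<le> (\<Sum>l\<in>L. sqrt (r l) * (cmod (y l) / sqrt (r l)))\<^sup>2"
    by (intro power_mono) auto
  also have "\<dots> \<le> (\<Sum>l\<in>L. (sqrt (r l))\<^sup>2) * (\<Sum>l\<in>L. (cmod (y l) / sqrt (r l))\<^sup>2)"
    by (rule Cauchy_Schwarz_ineq_sum)
  also have "\<dots> = (\<Sum>l\<in>L. r l) * (\<Sum>l\<in>L. (cmod (y l))\<^sup>2 / r l)"
    using assms(2) by (simp add: power_divide)
  finally have cs: "(cmod (\<Sum>l\<in>L. y l))\<^sup>2 \<le> (\<Sum>l\<in>L. r l) * (\<Sum>l\<in>L. (cmod (y l))\<^sup>2 / r l)" .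
  have nonneg: "0 \<le> (\<Sum>l\<in>L. r l)" "0 \<le> (\<Sum>l\<in>L. (cmod (y l))\<^sup>2 / r l)"
    using assms(2) by (auto intro: sum_nonneg)
  show ?thesis
  proof (cases "(\<Sum>l\<in>L. r l) = 0")
    case False
    hence "0 < (\<Sum>l\<in>L. r l)" using nonneg(1) by linarith
    thus ?thesis using cs by (subst pos_divide_le_eq) (simp_all add: algebra_simps)
  qed (use nonneg in simp)
qed

lemma onb_resolution_of_identity:
  assumes "onb d e" "a < d" "b < d"
  shows "(\<Sum>k<d. e k a * cnj (e k b)) = (if a = b then 1 else 0)"
proof -
  define U :: "complex Matrix.mat" where "U = Matrix.mat d d (\<lambda>(a, k). e k a)"
  define V :: "complex Matrix.mat" where "V = Matrix.mat d d (\<lambda>(k, a). cnj (e k a))"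
  have U: "U \<in> carrier_mat d d" and V: "V \<in> carrier_mat d d" by (auto simp: U_def V_def)
  have "V * U = 1\<^sub>m d"
  proof (rule eq_matI)
    fix k l assume "k < dim_row (1\<^sub>m d)" "l < dim_col (1\<^sub>m d)"
    thus "(V * U) $$ (k, l) = 1\<^sub>m d $$ (k, l)"
      using assms(1) by (simp add: U_def V_def scalar_prod_def atLeast0LessThan onb_def)
  qed (auto simp: U_def V_def)
  hence "U * V = 1\<^sub>m d" using mat_mult_left_right_inverse[OF V U] by simp
  hence "(U * V) $$ (a, b) = 1\<^sub>m d $$ (a, b)" by simp
  thus ?thesis using assms by (simp add: U_def V_def scalar_prod_def atLeast0LessThan)
qed

section \<open>Completely positive maps and Hilbert-Schmidt adjoints\<close>

lemma sum_lessThan_1_times: "(\<Sum>p\<in>{..<1::nat} \<times> I. g p) = (\<Sum>i\<in>I. g (0, i))"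
proof -
  have "{..<1::nat} \<times> I = Pair 0 ` I" by auto
  moreover have "inj_on (Pair (0::nat)) I" by (auto simp: inj_on_def)
  ultimately show ?thesis by (simp add: sum.reindex)
qed

lemma completely_positive_imp_positive:
  fixes X :: "'i mat"
  assumes "completely_positive I J c" "psd_on I X"
  shows "psd_on J (apply_map I c X)"
proof -
  \<comment> \<open>complete positivity with a one-dimensional ancilla\<close>
  define X1 :: "(nat \<times> 'i) mat" where "X1 = (\<lambda>(_, i) (_, i'). X i i')"
  let ?Y1 = "\<lambda>(a, j) (a', j'). \<Sum>i\<in>I. \<Sum>i'\<in>I. c j j' i i' * X1 (a, i) (a', i')"
  have "psd_on ({..<1} \<times> I) X1"
    unfolding psd_on_iff_qform
  proof
    fix v :: "nat \<times> 'i \<Rightarrow> complex"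
    have "qform ({..<1} \<times> I) X1 v = qform I X (\<lambda>i. v (0, i))"
      unfolding qform_def sum_lessThan_1_times by (simp add: X1_def)
    thus "Im (qform ({..<1} \<times> I) X1 v) = 0 \<and> 0 \<le> Re (qform ({..<1} \<times> I) X1 v)"
      using assms(2) by (simp add: psd_on_iff_qform)
  qed
  hence Y1: "psd_on ({..<1} \<times> J) ?Y1"
    using assms(1) unfolding completely_positive_def by blast
  show ?thesis
    unfolding psd_on_iff_qform
  proof
    fix w
    have "qform J (apply_map I c X) w = qform ({..<1} \<times> J) ?Y1 (\<lambda>(_, j). w j)"
      unfolding qform_def sum_lessThan_1_times by (simp add: X1_def apply_map_def)
    thus "Im (qform J (apply_map I c X) w) = 0 \<and> 0 \<le> Re (qform J (apply_map I c X) w)"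
      using Y1 by (simp add: psd_on_iff_qform)
  qed
qed

lemma apply_map_matrix_unit:
  assumes "finite I" "a \<in> I" "a' \<in> I"
  shows "apply_map I c (\<lambda>x y. if x = a \<and> y = a' then 1 else 0) j j' = c j j' a a'"
proof -
  have "apply_map I c (\<lambda>x y. if x = a \<and> y = a' then 1 else 0) j j'
      = (\<Sum>x\<in>I. \<Sum>y\<in>I. if x = a then if y = a' then c j j' x y else 0 else 0)"
    unfolding apply_map_def by (intro sum.cong refl) simp
  also have "\<dots> = c j j' a a'" using assms by (simp only: sum_sum_delta)
  finally show ?thesis .
qed

lemma sum_swap_double:
  "(\<Sum>a\<in>A. \<Sum>a'\<in>A'. \<Sum>b\<in>B. \<Sum>b'\<in>B'. F a a' b b') = (\<Sum>b\<in>B. \<Sum>b'\<in>B'. \<Sum>a\<in>A. \<Sum>a'\<in>A'. F a a' b b')"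
proof -
  have "(\<Sum>a\<in>A. \<Sum>a'\<in>A'. \<Sum>b\<in>B. \<Sum>b'\<in>B'. F a a' b b') = (\<Sum>a\<in>A. \<Sum>b\<in>B. \<Sum>a'\<in>A'. \<Sum>b'\<in>B'. F a a' b b')"
    by (intro sum.cong refl sum.swap)
  also have "\<dots> = (\<Sum>b\<in>B. \<Sum>a\<in>A. \<Sum>b'\<in>B'. \<Sum>a'\<in>A'. F a a' b b')"
    by (subst sum.swap) (intro sum.cong refl sum.swap)
  also have "\<dots> = (\<Sum>b\<in>B. \<Sum>b'\<in>B'. \<Sum>a\<in>A. \<Sum>a'\<in>A'. F a a' b b')"
    by (intro sum.cong refl sum.swap)
  finally show ?thesis .
qed

lemma hs_adjoint_rank_one_pairing:
  "(\<Sum>a\<in>I. \<Sum>a'\<in>I. cnj (X a a') * hs_adjoint J c (rank_one u) a a') = cnj (qform J (apply_map I c X) u)"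
proof -
  have "(\<Sum>a\<in>I. \<Sum>a'\<in>I. cnj (X a a') * hs_adjoint J c (rank_one u) a a')
     = (\<Sum>a\<in>I. \<Sum>a'\<in>I. \<Sum>f\<in>J. \<Sum>f'\<in>J. cnj (X a a') * cnj (c f f' a a') * u f * cnj (u f'))"
    unfolding hs_adjoint_def rank_one_def sum_distrib_left by (intro sum.cong refl) (simp add: mult_ac)
  also have "\<dots> = (\<Sum>f\<in>J. \<Sum>f'\<in>J. \<Sum>a\<in>I. \<Sum>a'\<in>I. cnj (X a a') * cnj (c f f' a a') * u f * cnj (u f'))"
    by (rule sum_swap_double)
  also have "\<dots> = cnj (qform J (apply_map I c X) u)"
    unfolding qform_def apply_map_def cnj_sum complex_cnj_mult complex_cnj_cnj sum_distrib_left sum_distrib_right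
    by (intro sum.cong refl) (simp add: mult_ac)
  finally show ?thesis .
qed

lemma psd_on_hs_adjoint_rank_one:
  assumes "completely_positive I J c"
  shows "psd_on I (hs_adjoint J c (rank_one u))"
  unfolding psd_on_iff_qform
proof
  fix v
  have "qform I (hs_adjoint J c (rank_one u)) v
      = (\<Sum>a\<in>I. \<Sum>a'\<in>I. cnj (rank_one v a a') * hs_adjoint J c (rank_one u) a a')"
    unfolding qform_def rank_one_def by (intro sum.cong refl) (simp add: mult_ac)
  also have "\<dots> = cnj (qform J (apply_map I c (rank_one v)) u)"
    by (rule hs_adjoint_rank_one_pairing)
  finally show "Im (qform I (hs_adjoint J c (rank_one u)) v) = 0 \<and> 0 \<le> Re (qform I (hs_adjoint J c (rank_one u)) v)"
    using completely_positive_imp_positive[OF assms psd_on_rank_one] by (simp add: psd_on_iff_qform)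
qed

lemma hs_adjoint_sum:
  "hs_adjoint J c (\<lambda>f f'. \<Sum>l\<in>L. Y l f f') a a' = (\<Sum>l\<in>L. hs_adjoint J c (Y l) a a')"
proof -
  have "hs_adjoint J c (\<lambda>f f'. \<Sum>l\<in>L. Y l f f') a a'
      = (\<Sum>j\<in>J. \<Sum>l\<in>L. \<Sum>j'\<in>J. cnj (c j j' a a') * Y l j j')"
    unfolding hs_adjoint_def sum_distrib_left by (intro sum.cong refl sum.swap)
  also have "\<dots> = (\<Sum>l\<in>L. hs_adjoint J c (Y l) a a')"
    unfolding hs_adjoint_def by (rule sum.swap)
  finally show ?thesis .
qed

lemma hs_adjoint_identity:
  assumes "trace_preserving I J c" "finite I" "finite J" "a \<in> I" "a' \<in> I"
  shows "hs_adjoint J c (\<lambda>f f'. if f = f' then 1 else 0) a a' = (if a = a' then 1 else 0)"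
proof -
  let ?E = "\<lambda>x y. if x = a \<and> y = a' then 1 else (0::complex)"
  have "hs_adjoint J c (\<lambda>f f'. if f = f' then 1 else 0) a a'
      = (\<Sum>f\<in>J. \<Sum>f'\<in>J. if f' = f then cnj (c f f' a a') else 0)"
    unfolding hs_adjoint_def by (intro sum.cong refl) auto
  also have "\<dots> = cnj (mtrace J (apply_map I c ?E))"
    using assms(2-5) by (simp add: mtrace_def apply_map_matrix_unit)
  also have "\<dots> = cnj (mtrace I ?E)"
    using assms(1) by (simp add: trace_preserving_def)
  also have "mtrace I ?E = (\<Sum>x\<in>I. if x = a then if a = a' then 1 else 0 else 0)"
    unfolding mtrace_def by (intro sum.cong refl) auto
  finally show ?thesis using assms(2,4) by simp
qed

section \<open>Product bases of tensor powers\<close>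

lemma finite_tens_idx: "finite S \<Longrightarrow> finite (tens_idx d S)"
  by (simp add: tens_idx_def finite_PiE)

lemma tens_idx_less: "f \<in> tens_idx d S \<Longrightarrow> j \<in> S \<Longrightarrow> f j < d"
  by (auto simp: tens_idx_def PiE_iff)

lemma tens_idx_eqI: "f \<in> tens_idx d S \<Longrightarrow> f' \<in> tens_idx d S \<Longrightarrow> (\<And>j. j \<in> S \<Longrightarrow> f j = f' j) \<Longrightarrow> f = f'"
  unfolding tens_idx_def by (rule PiE_ext)

lemma sum_tens_idx_split:
  assumes "i \<in> S"
  shows "(\<Sum>f\<in>tens_idx d S. G f) = (\<Sum>j<d. \<Sum>h\<in>tens_idx d (S - {i}). G (h(i := j)))"
proof -
  let ?upd = "\<lambda>(j, h). h(i := j)"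
  have "tens_idx d S = ?upd ` ({..<d} \<times> tens_idx d (S - {i}))"
    using assms unfolding tens_idx_def by (metis PiE_insert_eq insert_Diff)
  moreover have "inj_on ?upd ({..<d} \<times> tens_idx d (S - {i}))"
    unfolding tens_idx_def by (rule inj_combinator) simp
  ultimately show ?thesis
    by (simp add: sum.reindex sum.cartesian_product case_prod_unfold)
qed

lemma sum_tens_idx_agree:
  assumes "finite S" "i \<in> S" "f \<in> tens_idx d S"
  shows "(\<Sum>f'\<in>tens_idx d S. if \<forall>j\<in>S - {i}. f j = f' j then F f' else 0) = (\<Sum>j<d. F (f(i := j)))"
proof -
  \<comment> \<open>the restriction of f to S - {i}; members of \<open>tens_idx\<close> are extensional\<close>
  define h0 where "h0 = f(i := undefined)"
  have h0: "h0 \<in> tens_idx d (S - {i})"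
    using assms(3) unfolding h0_def tens_idx_def by (auto simp: PiE_iff extensional_def)
  have agree_iff: "(\<forall>j'\<in>S - {i}. f j' = (h(i := j)) j') \<longleftrightarrow> h = h0" if "h \<in> tens_idx d (S - {i})" for h j
  proof
    assume "\<forall>j'\<in>S - {i}. f j' = (h(i := j)) j'"
    thus "h = h0" by (intro tens_idx_eqI[OF that h0]) (auto simp: h0_def)
  qed (simp add: h0_def)
  have "(\<Sum>f'\<in>tens_idx d S. if \<forall>j\<in>S - {i}. f j = f' j then F f' else 0)
      = (\<Sum>j<d. \<Sum>h\<in>tens_idx d (S - {i}). if h = h0 then F (h(i := j)) else 0)"
    unfolding sum_tens_idx_split[OF assms(2)]
  proof (intro sum.cong refl)
    fix j h assume "h \<in> tens_idx d (S - {i})"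
    thus "(if \<forall>j'\<in>S - {i}. f j' = (h(i := j)) j' then F (h(i := j)) else 0)
        = (if h = h0 then F (h(i := j)) else 0)"
      by (simp only: agree_iff)
  qed
  also have "\<dots> = (\<Sum>j<d. F (f(i := j)))"
    using h0 finite_tens_idx[of "S - {i}"] assms(1) by (simp add: h0_def)
  finally show ?thesis .
qed

lemma prod_if_eq_if_all:
  "finite A \<Longrightarrow> (\<Prod>j\<in>A. if P j then (1::'a::comm_semiring_1) else 0) = (if \<forall>j\<in>A. P j then 1 else 0)"
  by (induction A rule: finite_induct) auto

definition prod_basis :: "nat set \<Rightarrow> (nat \<Rightarrow> nat \<Rightarrow> nat \<Rightarrow> complex) \<Rightarrow> (nat \<Rightarrow> nat) \<Rightarrow> (nat \<Rightarrow> nat) \<Rightarrow> complex" where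
  "prod_basis S e l = (\<lambda>f. \<Prod>j\<in>S. e j (l j) (f j))"

lemma prod_basis_resolution_of_identity:
  assumes "finite S" "\<forall>j\<in>S. onb d (e j)" "f \<in> tens_idx d S" "f' \<in> tens_idx d S"
  shows "(\<Sum>l\<in>tens_idx d S. rank_one (prod_basis S e l) f f') = (if f = f' then 1 else 0)"
proof -
  have "(\<Sum>l\<in>tens_idx d S. rank_one (prod_basis S e l) f f')
      = (\<Sum>l\<in>tens_idx d S. \<Prod>j\<in>S. e j (l j) (f j) * cnj (e j (l j) (f' j)))"
    by (simp add: rank_one_def prod_basis_def prod.distrib)
  also have "\<dots> = (\<Prod>j\<in>S. \<Sum>k<d. e j k (f j) * cnj (e j k (f' j)))"
    using assms(1) by (simp add: prod_sum_PiE tens_idx_def)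
  also have "\<dots> = (\<Prod>j\<in>S. if f j = f' j then 1 else 0)"
    using assms by (intro prod.cong refl) (simp add: onb_resolution_of_identity tens_idx_less)
  also have "\<dots> = (if f = f' then 1 else 0)"
    using assms(1) tens_idx_eqI[OF assms(3,4)] by (auto simp: prod_if_eq_if_all)
  finally show ?thesis .
qed

lemma prod_basis_partial_resolution:
  assumes "finite S" "\<forall>j\<in>S. onb d (e j)" "f \<in> tens_idx d S" "f' \<in> tens_idx d S" "i \<in> S" "k < d"
  shows "(\<Sum>l\<in>{l \<in> tens_idx d S. l i = k}. rank_one (prod_basis S e l) f f')
       = e i k (f i) * cnj (e i k (f' i)) * (if \<forall>j\<in>S - {i}. f j = f' j then 1 else 0)"
proof -
  \<comment> \<open>absorbing the constraint l i = k into the i-th factor makes the sum over l factorise\<close>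
  define g where "g j y = (if j = i then if y = k then 1 else 0 else 1) * (e j y (f j) * cnj (e j y (f' j)))" for j y
  have "(\<Sum>l\<in>{l \<in> tens_idx d S. l i = k}. rank_one (prod_basis S e l) f f')
      = (\<Sum>l\<in>tens_idx d S. \<Prod>j\<in>S. g j (l j))"
  proof -
    have "(\<Prod>j\<in>S. g j (l j)) = (if l i = k then rank_one (prod_basis S e l) f f' else 0)" for l
    proof -
      have "(\<Prod>j\<in>S. g j (l j)) = (\<Prod>j\<in>S. if j = i then if l j = k then 1 else 0 else 1)
          * (\<Prod>j\<in>S. e j (l j) (f j) * cnj (e j (l j) (f' j)))"
        unfolding g_def prod.distrib ..
      thus ?thesis using assms(1,5) by (simp add: rank_one_def prod_basis_def prod.distrib)
    qed
    thus ?thesis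
      using finite_tens_idx[OF assms(1)] by (simp add: sum.inter_filter[symmetric] Collect_conj_eq)
  qed
  also have "\<dots> = (\<Prod>j\<in>S. \<Sum>y<d. g j y)"
    using assms(1) by (simp add: prod_sum_PiE tens_idx_def)
  also have "\<dots> = (\<Sum>y<d. g i y) * (\<Prod>j\<in>S - {i}. \<Sum>y<d. g j y)"
    using assms(1,5) by (simp add: prod.remove)
  also have "(\<Sum>y<d. g i y) = e i k (f i) * cnj (e i k (f' i))"
  proof -
    have "g i y = (if y = k then e i y (f i) * cnj (e i y (f' i)) else 0)" for y by (simp add: g_def)
    thus ?thesis using assms(6) by simp
  qed
  also have "(\<Prod>j\<in>S - {i}. \<Sum>y<d. g j y) = (\<Prod>j\<in>S - {i}. if f j = f' j then 1 else 0)"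
    using assms(2-4) by (intro prod.cong refl) (simp add: g_def onb_resolution_of_identity tens_idx_less)
  also have "\<dots> = (if \<forall>j\<in>S - {i}. f j = f' j then 1 else 0)"
    using assms(1) by (simp add: prod_if_eq_if_all)
  finally show ?thesis .
qed

section \<open>The semidefinite program\<close>

text \<open>\<open>vec_pairing P v X\<close> is the inner product \<langle>v|X\<rangle> of v with the vectorisation of X.\<close>

definition vec_pairing :: "('p \<times> 'p) set \<Rightarrow> ('p \<times> 'p \<Rightarrow> complex) \<Rightarrow> 'p mat \<Rightarrow> complex" where
  "vec_pairing P v X = (\<Sum>p\<in>P. cnj (v p) * X (fst p) (snd p))"

lemma qform_vec_outer: "qform P (vec_outer X) v = vec_pairing P v X * cnj (vec_pairing P v X)"
  by (simp add: qform_def vec_outer_def vec_pairing_def case_prod_beta sum_distrib_left sum_distrib_right mult_ac)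

lemma qform_sum_vec_outer:
  "qform P (\<lambda>p q. \<Sum>l\<in>L. vec_outer (X l) p q / of_real (c l)) v
     = of_real (\<Sum>l\<in>L. (cmod (vec_pairing P v (X l)))\<^sup>2 / c l)"
proof -
  have "qform P (\<lambda>p q. \<Sum>l\<in>L. vec_outer (X l) p q / of_real (c l)) v
      = (\<Sum>l\<in>L. \<Sum>p\<in>P. \<Sum>q\<in>P. cnj (v p) * vec_outer (X l) p q * v q / of_real (c l))"
    unfolding qform_def sum_distrib_left sum_distrib_right
    by (subst sum.swap, subst (2) sum.swap) (simp add: sum.swap[of _ L])
  also have "\<dots> = (\<Sum>l\<in>L. qform P (vec_outer (X l)) v / of_real (c l))"
    by (simp add: qform_def sum_divide_distrib)
  also have "\<dots> = of_real (\<Sum>l\<in>L. (cmod (vec_pairing P v (X l)))\<^sup>2 / c l)"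
    by (simp add: qform_vec_outer complex_norm_square[symmetric])
  finally show ?thesis .
qed

text \<open>Since x / 0 = 0, the terms with vanishing trace, which \<open>G_mat\<close> omits, may be kept.\<close>

lemma G_mat_eq_sum:
  "G_mat d \<Phi> e = (\<lambda>p q. \<Sum>k<d. vec_outer (hs_adjoint {..<d} \<Phi> (ketbra (e k))) p q
      / mtrace {..<d} (hs_adjoint {..<d} \<Phi> (ketbra (e k))))"
  unfolding G_mat_def by (intro ext sum.mono_neutral_left) auto

lemma sdp_val_le_trace:
  assumes "i0 \<in> S" "hermitian_on ({..<d} \<times> {..<d}) H"
    and "\<forall>i\<in>S. psd_on ({..<d} \<times> {..<d}) (\<lambda>p q. H p q - G_mat d (\<Phi> i) (e i) p q)"
  shows "sdp_val d \<Phi> S e \<le> Re (mtrace ({..<d} \<times> {..<d}) H)"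
proof -
  let ?P = "{..<d} \<times> {..<d}"
  let ?V = "{Re (mtrace ?P H) | H. hermitian_on ?P H \<and>
      (\<forall>i\<in>S. psd_on ?P (\<lambda>p q. H p q - G_mat d (\<Phi> i) (e i) p q))}"
  have "bdd_below ?V"
  proof (rule bdd_belowI)
    fix x assume "x \<in> ?V"
    then obtain H' where x: "x = Re (mtrace ?P H')"
      and psd: "psd_on ?P (\<lambda>p q. H' p q - G_mat d (\<Phi> i0) (e i0) p q)"
      using assms(1) by blast
    have "0 \<le> Re (mtrace ?P (\<lambda>p q. H' p q - G_mat d (\<Phi> i0) (e i0) p q))"
      using psd_on_trace(2)[OF _ psd] by simp
    thus "Re (mtrace ?P (G_mat d (\<Phi> i0) (e i0))) \<le> x"
      unfolding x by (simp add: mtrace_def sum_subtractf)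
  qed
  thus ?thesis
    unfolding sdp_val_def using assms(2,3) by (intro cInf_lower) blast+
qed

locale joint_channel =
  fixes d :: nat and S :: "nat set" and e :: "nat \<Rightarrow> nat \<Rightarrow> nat \<Rightarrow> complex"
    and \<Lambda> :: "(nat \<Rightarrow> nat, nat) lmap" and \<Phi> :: "nat \<Rightarrow> (nat, nat) lmap"
  assumes finite_S: "finite S"
    and onb: "\<forall>i\<in>S. onb d (e i)"
    and is_channel: "channel {..<d} (tens_idx d S) \<Lambda>"
    and marginals: "\<forall>i\<in>S. \<forall>X. \<forall>a<d. \<forall>b<d.
      marginal d S i (apply_map {..<d} \<Lambda> X) a b = apply_map {..<d} (\<Phi> i) X a b"
begin

text \<open>\<open>povm l\<close> and \<open>weight l\<close> are the operators M_l and their traces Tr M_l.\<close>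

definition povm :: "(nat \<Rightarrow> nat) \<Rightarrow> nat mat" where
  "povm l = hs_adjoint (tens_idx d S) \<Lambda> (rank_one (prod_basis S e l))"

definition weight :: "(nat \<Rightarrow> nat) \<Rightarrow> real" where
  "weight l = Re (mtrace {..<d} (povm l))"

lemma povm_psd: "psd_on {..<d} (povm l)"
  using is_channel psd_on_hs_adjoint_rank_one unfolding channel_def povm_def by blast

lemma trace_povm: "mtrace {..<d} (povm l) = of_real (weight l)"
  using psd_on_trace(1)[OF _ povm_psd] by (simp add: weight_def complex_eq_iff)

lemma weight_nonneg: "0 \<le> weight l"
  using psd_on_trace(2)[OF _ povm_psd] by (simp add: weight_def)

lemma povm_eq_0: "weight l = 0 \<Longrightarrow> a < d \<Longrightarrow> b < d \<Longrightarrow> povm l a b = 0"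
  by (rule psd_on_eq_0_if_trace_0[OF _ povm_psd]) (simp_all add: trace_povm)

lemma povm_hs_norm_le: "(\<Sum>a<d. \<Sum>b<d. (cmod (povm l a b))\<^sup>2) \<le> (weight l)\<^sup>2"
  using psd_on_hs_norm_le_trace[OF _ povm_psd] by (simp add: weight_def)

lemma sum_povm:
  assumes "a < d" "a' < d"
  shows "(\<Sum>l\<in>tens_idx d S. povm l a a') = (if a = a' then 1 else 0)"
proof -
  have "(\<Sum>l\<in>tens_idx d S. povm l a a')
      = hs_adjoint (tens_idx d S) \<Lambda> (\<lambda>f f'. \<Sum>l\<in>tens_idx d S. rank_one (prod_basis S e l) f f') a a'"
    unfolding povm_def hs_adjoint_sum ..
  also have "\<dots> = hs_adjoint (tens_idx d S) \<Lambda> (\<lambda>f f'. if f = f' then 1 else 0) a a'"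
    unfolding hs_adjoint_def using finite_S onb
    by (intro sum.cong refl) (simp add: prod_basis_resolution_of_identity)
  also have "\<dots> = (if a = a' then 1 else 0)"
    using is_channel finite_tens_idx[OF finite_S] assms
    by (intro hs_adjoint_identity[where I = "{..<d}"]) (simp_all add: channel_def)
  finally show ?thesis .
qed

lemma sum_weight: "(\<Sum>l\<in>tens_idx d S. weight l) = real d"
proof -
  have "of_real (\<Sum>l\<in>tens_idx d S. weight l) = (\<Sum>l\<in>tens_idx d S. mtrace {..<d} (povm l))"
    by (simp add: trace_povm)
  also have "\<dots> = (\<Sum>a<d. \<Sum>l\<in>tens_idx d S. povm l a a)"
    unfolding mtrace_def by (rule sum.swap)
  also have "\<dots> = of_nat d"
    by (simp add: sum_povm)
  finally show ?thesis
    by (metis of_real_eq_iff of_real_of_nat_eq)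
qed

lemma marginal_kernel:
  assumes "i \<in> S" "j < d" "j' < d" "a < d" "a' < d"
  shows "\<Phi> i j j' a a' = (\<Sum>h\<in>tens_idx d (S - {i}). \<Lambda> (h(i := j)) (h(i := j')) a a')"
proof -
  let ?E = "\<lambda>x y. if x = a \<and> y = a' then 1 else (0::complex)"
  have "\<Phi> i j j' a a' = apply_map {..<d} (\<Phi> i) ?E j j'"
    using assms(4,5) by (simp add: apply_map_matrix_unit)
  also have "\<dots> = marginal d S i (apply_map {..<d} \<Lambda> ?E) j j'"
    using marginals assms(1-3) by simp
  also have "\<dots> = (\<Sum>h\<in>tens_idx d (S - {i}). \<Lambda> (h(i := j)) (h(i := j')) a a')"
    using assms(4,5) by (simp add: marginal_def apply_map_matrix_unit)
  finally show ?thesis .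
qed

lemma hs_adjoint_marginal_ketbra:
  assumes i: "i \<in> S" and "k < d" "a < d" "a' < d"
  shows "hs_adjoint {..<d} (\<Phi> i) (ketbra (e i k)) a a' = (\<Sum>l\<in>{l \<in> tens_idx d S. l i = k}. povm l a a')"
proof -
  let ?T = "tens_idx d S" and ?T' = "tens_idx d (S - {i})"
  have "hs_adjoint {..<d} (\<Phi> i) (ketbra (e i k)) a a'
      = (\<Sum>j<d. \<Sum>j'<d. \<Sum>h\<in>?T'. cnj (\<Lambda> (h(i := j)) (h(i := j')) a a') * (e i k j * cnj (e i k j')))"
    unfolding hs_adjoint_def ketbra_def using assms
    by (intro sum.cong refl) (simp add: marginal_kernel sum_distrib_right)
  also have "\<dots> = (\<Sum>j<d. \<Sum>h\<in>?T'. \<Sum>j'<d. cnj (\<Lambda> (h(i := j)) (h(i := j')) a a') * (e i k j * cnj (e i k j')))"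
    by (intro sum.cong refl sum.swap)
  also have "\<dots> = (\<Sum>f\<in>?T. \<Sum>j'<d. cnj (\<Lambda> f (f(i := j')) a a') * (e i k (f i) * cnj (e i k j')))"
    unfolding sum_tens_idx_split[OF i] by simp
  also have "\<dots> = (\<Sum>f\<in>?T. \<Sum>f'\<in>?T. if \<forall>j\<in>S - {i}. f j = f' j
      then cnj (\<Lambda> f f' a a') * (e i k (f i) * cnj (e i k (f' i))) else 0)"
    using finite_S i by (intro sum.cong refl) (simp add: sum_tens_idx_agree)
  also have "\<dots> = (\<Sum>f\<in>?T. \<Sum>f'\<in>?T. cnj (\<Lambda> f f' a a')
      * (\<Sum>l\<in>{l \<in> ?T. l i = k}. rank_one (prod_basis S e l) f f'))"
    using finite_S onb assms by (intro sum.cong refl) (simp add: prod_basis_partial_resolution)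
  also have "\<dots> = (\<Sum>l\<in>{l \<in> ?T. l i = k}. \<Sum>f\<in>?T. \<Sum>f'\<in>?T. cnj (\<Lambda> f f' a a') * rank_one (prod_basis S e l) f f')"
    unfolding sum_distrib_left by (subst (2) sum.swap, subst sum.swap, rule refl)
  also have "\<dots> = (\<Sum>l\<in>{l \<in> ?T. l i = k}. povm l a a')"
    unfolding povm_def hs_adjoint_def ..
  finally show ?thesis .
qed

text \<open>The sum runs over all l: terms of weight 0 vanish because x / 0 = 0.\<close>

definition witness :: "(nat \<times> nat) mat" where
  "witness = (\<lambda>p q. \<Sum>l\<in>tens_idx d S. vec_outer (povm l) p q / of_real (weight l))"

lemma hermitian_witness: "hermitian_on ({..<d} \<times> {..<d}) witness"
  unfolding hermitian_on_def witness_def by (auto simp: vec_outer_def case_prod_beta mult.commute)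

lemma trace_witness_le: "Re (mtrace ({..<d} \<times> {..<d}) witness) \<le> real d"
proof -
  let ?T = "tens_idx d S"
  have diag: "vec_outer X p p = of_real ((cmod (X (fst p) (snd p)))\<^sup>2)" for X p
    using complex_norm_square[of "X (fst p) (snd p)"] by (simp add: vec_outer_def case_prod_beta)
  have "mtrace ({..<d} \<times> {..<d}) witness
      = (\<Sum>l\<in>?T. \<Sum>p\<in>{..<d} \<times> {..<d}. of_real ((cmod (povm l (fst p) (snd p)))\<^sup>2 / weight l))"
    unfolding mtrace_def witness_def diag by (simp add: sum.swap[of _ ?T])
  also have "\<dots> = of_real (\<Sum>l\<in>?T. (\<Sum>a<d. \<Sum>b<d. (cmod (povm l a b))\<^sup>2) / weight l)"
    by (simp add: sum.cartesian_product sum_divide_distrib case_prod_unfold)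
  finally have "Re (mtrace ({..<d} \<times> {..<d}) witness) = (\<Sum>l\<in>?T. (\<Sum>a<d. \<Sum>b<d. (cmod (povm l a b))\<^sup>2) / weight l)"
    by simp
  also have "\<dots> \<le> (\<Sum>l\<in>?T. weight l)"
  proof (rule sum_mono)
    fix l
    show "(\<Sum>a<d. \<Sum>b<d. (cmod (povm l a b))\<^sup>2) / weight l \<le> weight l"
    proof (cases "weight l = 0")
      case False
      hence "0 < weight l" using weight_nonneg[of l] by simp
      thus ?thesis using povm_hs_norm_le[of l] by (simp add: pos_divide_le_eq power2_eq_square)
    qed simp
  qed
  also have "\<dots> = real d" by (rule sum_weight)
  finally show ?thesis .
qed

lemma qform_G_mat:
  assumes i: "i \<in> S"
  shows "qform ({..<d} \<times> {..<d}) (G_mat d (\<Phi> i) (e i)) v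
    = of_real (\<Sum>k<d. (cmod (\<Sum>l\<in>{l \<in> tens_idx d S. l i = k}. vec_pairing ({..<d} \<times> {..<d}) v (povm l)))\<^sup>2
        / (\<Sum>l\<in>{l \<in> tens_idx d S. l i = k}. weight l))"
proof -
  let ?P = "{..<d} \<times> {..<d}"
  define A where "A k = hs_adjoint {..<d} (\<Phi> i) (ketbra (e i k))" for k
  define T where "T k = {l \<in> tens_idx d S. l i = k}" for k
  have A: "A k a a' = (\<Sum>l\<in>T k. povm l a a')" if "k < d" "a < d" "a' < d" for k a a'
    unfolding A_def T_def using hs_adjoint_marginal_ketbra[OF i that] .
  have trace_A: "mtrace {..<d} (A k) = of_real (\<Sum>l\<in>T k. weight l)" if "k < d" for k
  proof -
    have "mtrace {..<d} (A k) = (\<Sum>l\<in>T k. mtrace {..<d} (povm l))"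
      unfolding mtrace_def using that by (simp add: A sum.swap[of _ "T k"])
    thus ?thesis by (simp add: trace_povm)
  qed
  have pairing_A: "vec_pairing ?P v (A k) = (\<Sum>l\<in>T k. vec_pairing ?P v (povm l))" if "k < d" for k
  proof -
    have "vec_pairing ?P v (A k) = (\<Sum>p\<in>?P. \<Sum>l\<in>T k. cnj (v p) * povm l (fst p) (snd p))"
      unfolding vec_pairing_def using that by (intro sum.cong refl) (auto simp: A sum_distrib_left)
    also have "\<dots> = (\<Sum>l\<in>T k. vec_pairing ?P v (povm l))"
      unfolding vec_pairing_def by (rule sum.swap)
    finally show ?thesis .
  qed
  have G: "G_mat d (\<Phi> i) (e i) = (\<lambda>p q. \<Sum>k<d. vec_outer (A k) p q / of_real (\<Sum>l\<in>T k. weight l))"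
    unfolding G_mat_eq_sum A_def[symmetric] by (intro ext sum.cong refl) (simp add: trace_A)
  show ?thesis
    unfolding G qform_sum_vec_outer T_def[symmetric] by (simp add: pairing_A)
qed

lemma witness_dominates_G:
  assumes i: "i \<in> S"
  shows "psd_on ({..<d} \<times> {..<d}) (\<lambda>p q. witness p q - G_mat d (\<Phi> i) (e i) p q)"
proof (rule psd_onI_real_nonneg)
  fix v
  let ?T = "tens_idx d S"
  let ?y = "\<lambda>l. vec_pairing ({..<d} \<times> {..<d}) v (povm l)"
  define T where "T k = {l \<in> ?T. l i = k}" for k
  have fibre: "(cmod (\<Sum>l\<in>T k. ?y l))\<^sup>2 / (\<Sum>l\<in>T k. weight l) \<le> (\<Sum>l\<in>T k. (cmod (?y l))\<^sup>2 / weight l)"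
    for k
  proof (rule norm_sum_squared_div_sum_le)
    show "finite (T k)"
      using finite_tens_idx[OF finite_S] by (simp add: T_def)
    show "0 \<le> weight l" for l
      by (rule weight_nonneg)
    show "?y l = 0" if "weight l = 0" for l
      unfolding vec_pairing_def using povm_eq_0[OF that] by (intro sum.neutral) auto
  qed
  have "(\<Sum>k<d. (cmod (\<Sum>l\<in>T k. ?y l))\<^sup>2 / (\<Sum>l\<in>T k. weight l))
      \<le> (\<Sum>k<d. \<Sum>l\<in>T k. (cmod (?y l))\<^sup>2 / weight l)"
    by (intro sum_mono fibre)
  also have "\<dots> = (\<Sum>l\<in>?T. (cmod (?y l))\<^sup>2 / weight l)"
    unfolding T_def using finite_S i tens_idx_less by (intro sum.group) (auto simp: finite_tens_idx)
  finally have "0 \<le> (\<Sum>l\<in>?T. (cmod (?y l))\<^sup>2 / weight l)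
      - (\<Sum>k<d. (cmod (\<Sum>l\<in>T k. ?y l))\<^sup>2 / (\<Sum>l\<in>T k. weight l))"
    by (rule diff_ge_0_iff_ge[THEN iffD2])
  moreover have "qform ({..<d} \<times> {..<d}) (\<lambda>p q. witness p q - G_mat d (\<Phi> i) (e i) p q) v
      = of_real ((\<Sum>l\<in>?T. (cmod (?y l))\<^sup>2 / weight l)
          - (\<Sum>k<d. (cmod (\<Sum>l\<in>T k. ?y l))\<^sup>2 / (\<Sum>l\<in>T k. weight l)))"
    unfolding qform_diff qform_G_mat[OF i] witness_def qform_sum_vec_outer T_def of_real_diff ..
  ultimately show "\<exists>r\<ge>0. qform ({..<d} \<times> {..<d}) (\<lambda>p q. witness p q - G_mat d (\<Phi> i) (e i) p q) v = of_real r"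
    by (intro exI conjI)
qed

lemma sdp_val_le:
  assumes "S \<noteq> {}"
  shows "sdp_val d \<Phi> S e \<le> real d"
proof -
  obtain i where "i \<in> S" using assms by blast
  hence "sdp_val d \<Phi> S e \<le> Re (mtrace ({..<d} \<times> {..<d}) witness)"
    using hermitian_witness witness_dominates_G by (intro sdp_val_le_trace) auto
  also have "\<dots> \<le> real d" by (rule trace_witness_le)
  finally show ?thesis .
qed

end

lemma compatible_imp_sdp_val_le:
  assumes "finite S" "S \<noteq> {}" "\<forall>i\<in>S. onb d (e i)" "compatible d S \<Phi>"
  shows "sdp_val d \<Phi> S e \<le> real d"
proof -
  obtain \<Lambda> where "channel {..<d} (tens_idx d S) \<Lambda>"
    and "\<forall>i\<in>S. \<forall>X. \<forall>a<d. \<forall>b<d. marginal d S i (apply_map {..<d} \<Lambda> X) a b = apply_map {..<d} (\<Phi> i) X a b"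
    using assms(4) unfolding compatible_def by blast
  then interpret joint_channel d S e \<Lambda> \<Phi>
    using assms(1,3) by unfold_locales
  show ?thesis using sdp_val_le[OF assms(2)] .
qed

theorem theorem6p2:
  fixes d N K :: nat and \<Phi> :: "nat \<Rightarrow> (nat, nat) lmap"
  assumes "0 < d"
    and "\<forall>i\<in>{1..N}. channel {..<d} {..<d} (\<Phi> i)"
    and "1 \<le> K" and "K \<le> N"
  shows "((\<exists>S e. S \<subseteq> {1..N} \<and> card S = K \<and> (\<forall>i\<in>S. onb d (e i)) \<and> sdp_val d \<Phi> S e > real d)
            \<longrightarrow> NK_incompatible d N K \<Phi>)
       \<and> ((\<forall>S. S \<subseteq> {1..N} \<and> card S = K \<longrightarrow>
              (\<exists>e. (\<forall>i\<in>S. onb d (e i)) \<and> sdp_val d \<Phi> S e > real d))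
            \<longrightarrow> NK_strong_incompatible d N K \<Phi>)"
proof -
  have incompatible: "\<not> compatible d S \<Phi>"
    if "S \<subseteq> {1..N}" "card S = K" "\<forall>i\<in>S. onb d (e i)" "sdp_val d \<Phi> S e > real d" for S e
  proof
    assume "compatible d S \<Phi>"
    moreover have "finite S" using that(1) finite_subset by blast
    moreover have "S \<noteq> {}" using that(2) assms(3) by auto
    ultimately have "sdp_val d \<Phi> S e \<le> real d"
      using that(3) compatible_imp_sdp_val_le by blast
    thus False using that(4) by simp
  qed
  show ?thesis
    unfolding NK_incompatible_def NK_strong_incompatible_def
  proof (intro conjI impI allI)
    assume "\<exists>S e. S \<subseteq> {1..N} \<and> card S = K \<and> (\<forall>i\<in>S. onb d (e i)) \<and> sdp_val d \<Phi> S e > real d"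
    then obtain S e where "S \<subseteq> {1..N}" "card S = K" "\<forall>i\<in>S. onb d (e i)" "sdp_val d \<Phi> S e > real d"
      by blast
    thus "\<exists>S. S \<subseteq> {1..N} \<and> card S = K \<and> \<not> compatible d S \<Phi>"
      using incompatible by blast
  next
    fix S
    assume "\<forall>S. S \<subseteq> {1..N} \<and> card S = K \<longrightarrow> (\<exists>e. (\<forall>i\<in>S. onb d (e i)) \<and> sdp_val d \<Phi> S e > real d)"
      and S: "S \<subseteq> {1..N} \<and> card S = K"
    then obtain e where "\<forall>i\<in>S. onb d (e i)" "sdp_val d \<Phi> S e > real d"
      by blast
    thus "\<not> compatible d S \<Phi>"
      using S incompatible by blast
  qed
qed

end
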